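(* Let $(X,d,\mu)$ be a metric measure space, $Y$ a complete metric space, $p\ge1$ and let $u\in N^{1,p}_{loc}(X,Y)$ be continuous. If $\gamma:[a,b]\to X$ is $(u,p)$-regular and $a\le t\le s\le b$, then $\gamma|_{[t,s]}$ is $(u,p)$-regular and $\ell_{u,p}(\gamma)=\ell(u\circ\gamma)$.
   Context: A metric measure space is a proper metric space with a Borel regular outer measure positive and finite on balls. $\operatorname{Mod}_p\Gamma=\inf\int\rho^pd\mu$ over Borel $\rho\ge0$ with $\int_\gamma\rho\ge1$ on $\Gamma$. For Lipschitz curves $\alpha,\beta$ on the same interval let $d_\infty(\alpha,\beta)=\sup_td(\alpha(t),\beta(t))$ and $B(\gamma,\delta)$ the open $d_\infty$-ball of Lipschitz curves. For a family $\Gamma$ of Lipschitz curves, $ess\ell_{u,p}(\Gamma):=\sup_{\operatorname{Mod}_p\Gamma_0=0}\inf\{\ell(u\circ\gamma):\gamma\in\Gamma\setminus\Gamma_0\}$ ($\inf\emptyset=\infty$). A Lipschitz curve $\gamma$ is $(u,p)$-regular if $u\circ\gamma$ is absolutely continuous and $ess\ell_{u,p}B(\gamma,\delta)\le\ell(u\circ\gamma)$ for every $\delta>0$. With $\Gamma(E,F)$ the Lipschitz curves $[0,1]\to X$ from $E$ to $F$, let $d'_{u,p}(x,y):=\lim_{\delta\to0}ess\ell_{u,p}\Gamma(\bar B(x,\delta),\bar B(y,\delta))$ and $d_{u,p}(x,y):=\inf\{\sum_{i=1}^nd'_{u,p}(x_{i-1},x_i):x_0=x,x_n=y\}$, the largest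 pseudometric $\le d'_{u,p}$. $\ell_{u,p}(\gamma)$ denotes the length of $\gamma$ with respect to $d_{u,p}$. *)

theory Defs
  imports "HOL-Analysis.Analysis" "HOL-Library.Extended_Nonnegative_Real"
begin

text \<open>A curve is represented as a triple (a, b, g): the map g restricted to [a,b].
  Values of g outside [a,b] are irrelevant.\<close>
type_synonym 'a curve = "real \<times> real \<times> (real \<Rightarrow> 'a)"

definition lip_curve :: "('a::metric_space) curve \<Rightarrow> bool" where
  "lip_curve c = (case c of (a, b, g) \<Rightarrow> a \<le> b \<and> (\<exists>L. L-lipschitz_on {a..b} g))"

definition enn_powr :: "ennreal \<Rightarrow> real \<Rightarrow> ennreal" where
  "enn_powr x p = (if x = top then top else ennreal (enn2real x powr p))"

definition var_length :: "('b \<Rightarrow> 'b \<Rightarrow> ennreal) \<Rightarrow> real \<Rightarrow> real \<Rightarrow> (real \<Rightarrow> 'b) \<Rightarrow> ennreal" where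
  "var_length d a b g =
     (SUP ts \<in> {ts. sorted ts \<and> set ts \<subseteq> {a..b}}.
        (\<Sum>i < length ts - 1. d (g (ts ! i)) (g (ts ! Suc i))))"

definition curve_length :: "real \<Rightarrow> real \<Rightarrow> (real \<Rightarrow> 'b::metric_space) \<Rightarrow> ennreal" where
  "curve_length a b g = var_length (\<lambda>x y. ennreal (dist x y)) a b g"

definition abs_cont_on :: "real \<Rightarrow> real \<Rightarrow> (real \<Rightarrow> 'b::metric_space) \<Rightarrow> bool" where
  "abs_cont_on a b f =
     (\<forall>\<epsilon>>0. \<exists>\<delta>>0. \<forall>(n::nat) (l::nat \<Rightarrow> real) (r::nat \<Rightarrow> real).
        (\<forall>i<n. a \<le> l i \<and> l i \<le> r i \<and> r i \<le> b) \<and>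
        (\<forall>i<n. \<forall>j<n. i \<noteq> j \<longrightarrow> {l i<..<r i} \<inter> {l j<..<r j} = {}) \<and>
        (\<Sum>i<n. r i - l i) < \<delta> \<longrightarrow>
        (\<Sum>i<n. dist (f (l i)) (f (r i))) < \<epsilon>)"

definition metric_speed :: "(real \<Rightarrow> 'a::metric_space) \<Rightarrow> real \<Rightarrow> ennreal" where
  "metric_speed g t = e2ennreal (Limsup (at (0::real)) (\<lambda>h. ereal (dist (g (t + h)) (g t) / \<bar>h\<bar>)))"

definition line_integral :: "('a::metric_space \<Rightarrow> ennreal) \<Rightarrow> 'a curve \<Rightarrow> ennreal" where
  "line_integral \<rho> c = (case c of (a, b, g) \<Rightarrow>
     (\<integral>\<^sup>+ t. \<rho> (g t) * metric_speed g t * indicator {a..b} t \<partial>lborel))"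

text \<open>Proper metric space with a Borel measure positive and finite on balls.
  (The Borel regular outer measure is represented by its restriction to Borel sets.)\<close>
definition mms :: "('a::metric_space) measure \<Rightarrow> bool" where
  "mms \<mu> = ((\<forall>(x::'a) r. compact (cball x r)) \<and> sets \<mu> = sets borel \<and>
     (\<forall>x r. r > 0 \<longrightarrow> 0 < emeasure \<mu> (ball x r) \<and> emeasure \<mu> (ball x r) < \<infinity>))"

definition p_modulus :: "('a::metric_space) measure \<Rightarrow> real \<Rightarrow> 'a curve set \<Rightarrow> ennreal" where
  "p_modulus \<mu> p \<Gamma> =
     (INF \<rho> \<in> {\<rho>. \<rho> \<in> borel_measurable borel \<and> (\<forall>c\<in>\<Gamma>. 1 \<le> line_integral \<rho> c)}.
        \<integral>\<^sup>+ x. enn_powr (\<rho> x) p \<partial>\<mu>)"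

definition weak_upper_gradient ::
  "('a::metric_space) measure \<Rightarrow> real \<Rightarrow> 'a set \<Rightarrow> ('a \<Rightarrow> 'b::metric_space) \<Rightarrow> ('a \<Rightarrow> ennreal) \<Rightarrow> bool" where
  "weak_upper_gradient \<mu> p U u g =
     (g \<in> borel_measurable borel \<and>
      (\<exists>\<Gamma>0. p_modulus \<mu> p \<Gamma>0 = 0 \<and>
        (\<forall>c. lip_curve c \<and> c \<notin> \<Gamma>0 \<and> (case c of (a, b, \<gamma>) \<Rightarrow> \<gamma> ` {a..b} \<subseteq> U) \<longrightarrow>
           (case c of (a, b, \<gamma>) \<Rightarrow> ennreal (dist (u (\<gamma> a)) (u (\<gamma> b))) \<le> line_integral g c))))"

text \<open>u in N^{1,p}(B,Y) for an open ball B (u measurable, essentially separably valued,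
  d(y0,u) in L^p(B), with a p-weak upper gradient in L^p(B)); N^{1,p}_loc: every point
  has such a ball.\<close>
definition newtonian_on ::
  "('a::metric_space) measure \<Rightarrow> real \<Rightarrow> 'a set \<Rightarrow> ('a \<Rightarrow> 'b::metric_space) \<Rightarrow> bool" where
  "newtonian_on \<mu> p U u =
     ((\<exists>N \<in> null_sets \<mu>. \<exists>D. countable D \<and> u ` (U - N) \<subseteq> closure D) \<and>
      (\<exists>y0. (\<integral>\<^sup>+ x. enn_powr (ennreal (dist y0 (u x))) p * indicator U x \<partial>\<mu>) < \<infinity>) \<and>
      (\<exists>g. weak_upper_gradient \<mu> p U u g \<and> (\<integral>\<^sup>+ x. enn_powr (g x) p * indicator U x \<partial>\<mu>) < \<infinity>))"

definition newtonian_loc ::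
  "('a::metric_space) measure \<Rightarrow> real \<Rightarrow> ('a \<Rightarrow> 'b::metric_space) \<Rightarrow> bool" where
  "newtonian_loc \<mu> p u =
     (u \<in> borel_measurable borel \<and> (\<forall>x. \<exists>r>0. newtonian_on \<mu> p (ball x r) u))"

definition ess_len ::
  "('a::metric_space) measure \<Rightarrow> real \<Rightarrow> ('a \<Rightarrow> 'b::metric_space) \<Rightarrow> 'a curve set \<Rightarrow> ennreal" where
  "ess_len \<mu> p u \<Gamma> =
     (SUP \<Gamma>0 \<in> {\<Gamma>0. p_modulus \<mu> p \<Gamma>0 = 0}.
        INF c \<in> \<Gamma> - \<Gamma>0. (case c of (a, b, \<gamma>) \<Rightarrow> curve_length a b (u \<circ> \<gamma>)))"

definition curve_ball :: "('a::metric_space) curve \<Rightarrow> real \<Rightarrow> 'a curve set" where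
  "curve_ball c \<delta> = (case c of (a, b, g) \<Rightarrow>
     {(a, b, h) | h. lip_curve (a, b, h) \<and> (SUP t \<in> {a..b}. ereal (dist (h t) (g t))) < ereal \<delta>})"

definition regular_curve ::
  "('a::metric_space) measure \<Rightarrow> real \<Rightarrow> ('a \<Rightarrow> 'b::metric_space) \<Rightarrow> 'a curve \<Rightarrow> bool" where
  "regular_curve \<mu> p u c = (lip_curve c \<and> (case c of (a, b, g) \<Rightarrow>
     abs_cont_on a b (u \<circ> g) \<and>
     (\<forall>\<delta>>0. ess_len \<mu> p u (curve_ball c \<delta>) \<le> curve_length a b (u \<circ> g))))"

definition curves_between :: "'a::metric_space set \<Rightarrow> 'a set \<Rightarrow> 'a curve set" where
  "curves_between E F = {(0, 1, g) | g. lip_curve (0, 1, g) \<and> g 0 \<in> E \<and> g 1 \<in> F}"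

definition d_prime ::
  "('a::metric_space) measure \<Rightarrow> real \<Rightarrow> ('a \<Rightarrow> 'b::metric_space) \<Rightarrow> 'a \<Rightarrow> 'a \<Rightarrow> ennreal" where
  "d_prime \<mu> p u x y =
     Lim (at_right (0::real)) (\<lambda>\<delta>. ess_len \<mu> p u (curves_between (cball x \<delta>) (cball y \<delta>)))"

definition d_up ::
  "('a::metric_space) measure \<Rightarrow> real \<Rightarrow> ('a \<Rightarrow> 'b::metric_space) \<Rightarrow> 'a \<Rightarrow> 'a \<Rightarrow> ennreal" where
  "d_up \<mu> p u x y =
     (INF zs \<in> (UNIV :: 'a list set).
        (let xs = x # zs @ [y] in
          \<Sum>i < length xs - 1. d_prime \<mu> p u (xs ! i) (xs ! Suc i)))"

definition len_up ::
  "('a::metric_space) measure \<Rightarrow> real \<Rightarrow> ('a \<Rightarrow> 'b::metric_space) \<Rightarrow> 'a curve \<Rightarrow> ennreal" where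
  "len_up \<mu> p u c = (case c of (a, b, g) \<Rightarrow> var_length (d_up \<mu> p u) a b g)"

end

theory Submission
  imports Defs
begin

text \<open>
  Restriction: a family of curves on \<open>[t,s]\<close> of modulus zero lifts to the family of curves on
  \<open>[a,b]\<close> whose restriction lies in it, which again has modulus zero because line integrals only
  grow. Regularity of \<open>\<gamma>\<close> thus supplies curves \<open>\<eta>\<close> uniformly close to \<open>\<gamma>\<close> off that family
  with \<open>\<ell>(u \<circ> \<eta>) \<le> \<ell>(u \<circ> \<gamma>) + \<epsilon>\<close>. By lower semicontinuity of length under uniform
  convergence, \<open>u \<circ> \<eta>\<close> is almost as long as \<open>u \<circ> \<gamma>\<close> on \<open>[a,t]\<close> and on \<open>[s,b]\<close>; since
  length is additive and \<open>\<ell>(u \<circ> \<gamma>)\<close> is finite by absolute continuity, \<open>u \<circ> \<eta>\<close> can then be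
  only slightly longer than \<open>u \<circ> \<gamma>\<close> on \<open>[t,s]\<close>.

  Length: rescaling those curves \<open>\<eta>\<close> affinely to \<open>[0,1]\<close> produces competitors for
  \<open>d'\<^sub>u\<^sub>,\<^sub>p(\<gamma>(x),\<gamma>(y))\<close>, so \<open>d\<^sub>u\<^sub>,\<^sub>p \<le> d'\<^sub>u\<^sub>,\<^sub>p \<le> \<ell>(u \<circ> \<gamma>|[x,y])\<close> by the first part; conversely
  \<open>d(u x, u y) \<le> d\<^sub>u\<^sub>,\<^sub>p(x,y)\<close> by continuity of \<open>u\<close>. Summing over partitions gives
  \<open>\<ell>\<^sub>u\<^sub>,\<^sub>p(\<gamma>) = \<ell>(u \<circ> \<gamma>)\<close>.
\<close>

section \<open>Variation along partitions\<close>

definition partitions :: "real \<Rightarrow> real \<Rightarrow> real list set" where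
  "partitions a b = {ts. sorted ts \<and> set ts \<subseteq> {a..b}}"

fun chain_sum :: "('b \<Rightarrow> 'b \<Rightarrow> ennreal) \<Rightarrow> 'b list \<Rightarrow> ennreal" where
  "chain_sum d (x # y # ys) = d x y + chain_sum d (y # ys)"
| "chain_sum d _ = 0"

lemma sum_consecutive_eq_chain_sum:
  "(\<Sum>i < length xs - 1. d (xs ! i) (xs ! Suc i)) = chain_sum d xs"
proof (induction d xs rule: chain_sum.induct)
  case (1 d x y ys)
  have "(\<Sum>i < length (x # y # ys) - 1. d ((x # y # ys) ! i) ((x # y # ys) ! Suc i))
      = d x y + (\<Sum>i < length (y # ys) - 1. d ((y # ys) ! i) ((y # ys) ! Suc i))"
    by (simp add: sum.lessThan_Suc_shift del: sum.lessThan_Suc)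
  then show ?case using 1 by simp
qed auto

lemma var_length_eq_SUP_chain_sum:
  "var_length d a b f = (SUP ts \<in> partitions a b. chain_sum d (map f ts))"
proof -
  have "(\<Sum>i < length ts - 1. d (f (ts ! i)) (f (ts ! Suc i))) = chain_sum d (map f ts)" for ts
    using sum_consecutive_eq_chain_sum[of d "map f ts"] by simp
  then show ?thesis unfolding var_length_def partitions_def by simp
qed

lemma chain_sum_mono: "(\<And>x y. d x y \<le> d' x y) \<Longrightarrow> chain_sum d xs \<le> chain_sum d' xs"
  by (induction d xs rule: chain_sum.induct) (auto intro: add_mono)

lemma chain_sum_Cons_ge: "chain_sum d ys \<le> chain_sum d (x # ys)"
  by (cases ys) auto

lemma chain_sum_append_ge: "chain_sum d xs + chain_sum d ys \<le> chain_sum d (xs @ ys)"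
proof (induction d xs rule: chain_sum.induct)
  case (1 d x y r)
  then show ?case by (simp add: add.assoc add_left_mono)
qed (auto simp: chain_sum_Cons_ge)

lemma chain_sum_append:
  "chain_sum d (xs @ y # ys) = chain_sum d (xs @ [y]) + chain_sum d (y # ys)"
  by (induction d xs rule: chain_sum.induct) (auto simp: add.assoc)

lemma chain_sum_insert_le:
  assumes "\<And>x y z. d x z \<le> d x y + d y z"
  shows "chain_sum d (xs @ ys) \<le> chain_sum d (xs @ m # ys)"
proof (induction xs rule: induct_list012)
  case 1
  show ?case using chain_sum_Cons_ge by simp
next
  case (2 x)
  show ?case
  proof (cases ys)
    case (Cons y ys')
    then show ?thesis using assms[of x y m] by (simp add: add.assoc add_right_mono)
  qed simp
next
  case (3 x y zs)
  then show ?case by (simp add: add_left_mono)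
qed

lemma chain_sum_ge_ends:
  assumes "\<And>x y z. d x z \<le> d x y + d y z"
  shows "d x y \<le> chain_sum d (x # zs @ [y])"
proof (induction zs arbitrary: x)
  case (Cons z zs)
  show ?case
    using assms[where x = x and y = z and z = y] Cons.IH[of z] by (simp add: add_left_mono order_trans)
qed simp

lemma chain_sum_le_var_length:
  "ts \<in> partitions a b \<Longrightarrow> chain_sum d (map f ts) \<le> var_length d a b f"
  unfolding var_length_eq_SUP_chain_sum by (rule SUP_upper)

lemma var_length_subinterval:
  "a \<le> c \<Longrightarrow> e \<le> b \<Longrightarrow> var_length d c e f \<le> var_length d a b f"
  unfolding var_length_eq_SUP_chain_sum partitions_def by (intro SUP_subset_mono) auto

lemma var_length_superadditive:
  assumes "a \<le> m" "m \<le> b"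
  shows "var_length d a m f + var_length d m b f \<le> var_length d a b f"
proof -
  have ne: "partitions a m \<noteq> {}" "partitions m b \<noteq> {}"
    by (auto simp: partitions_def intro!: exI[of _ "[]"])
  have "chain_sum d (map f P) + chain_sum d (map f Q) \<le> var_length d a b f"
    if "P \<in> partitions a m" "Q \<in> partitions m b" for P Q
  proof -
    have "P @ Q \<in> partitions a b"
      using that assms by (auto simp: partitions_def sorted_append subset_iff intro: order_trans)
    then have "chain_sum d (map f P @ map f Q) \<le> var_length d a b f"
      using chain_sum_le_var_length[of "P @ Q"] by simp
    then show ?thesis using chain_sum_append_ge[of d "map f P" "map f Q"] by (rule order_trans[rotated])
  qed
  then have "(SUP P \<in> partitions a m. chain_sum d (map f P) + var_length d m b f) \<le> var_length d a b f"
    unfolding var_length_eq_SUP_chain_sum[of d m b] ennreal_SUP_add_right[OF ne(2)]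
    by (intro SUP_least) auto
  then show ?thesis
    unfolding var_length_eq_SUP_chain_sum[of d a m] ennreal_SUP_add_left[OF ne(1)] .
qed

lemma sorted_split_at:
  fixes ts :: "real list"
  assumes "sorted ts"
  obtains xs ys where "ts = xs @ ys" "\<forall>x\<in>set xs. x \<le> m" "\<forall>y\<in>set ys. m \<le> y"
proof
  show "ts = takeWhile (\<lambda>x. x \<le> m) ts @ dropWhile (\<lambda>x. x \<le> m) ts" by simp
  show "\<forall>x\<in>set (takeWhile (\<lambda>x. x \<le> m) ts). x \<le> m" by (auto dest: set_takeWhileD)
  show "\<forall>y\<in>set (dropWhile (\<lambda>x. x \<le> m) ts). m \<le> y"
  proof
    fix y assume y: "y \<in> set (dropWhile (\<lambda>x. x \<le> m) ts)"
    then obtain z zs where zs: "dropWhile (\<lambda>x. x \<le> m) ts = z # zs"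
      by (cases "dropWhile (\<lambda>x. x \<le> m) ts") auto
    have "sorted (z # zs)" using zs sorted_dropWhile[OF assms] by metis
    moreover have "\<not> z \<le> m" using zs hd_dropWhile[of "\<lambda>x. x \<le> m" ts] by simp
    moreover have "y \<in> set (z # zs)" using y zs by simp
    ultimately show "m \<le> y" by (auto simp: not_le)
  qed
qed

lemma var_length_subadditive:
  assumes tri: "\<And>x y z. d x z \<le> d x y + d y z" and "a \<le> m" "m \<le> b"
  shows "var_length d a b f \<le> var_length d a m f + var_length d m b f"
  unfolding var_length_eq_SUP_chain_sum[of d a b]
proof (rule SUP_least)
  fix ts assume ts: "ts \<in> partitions a b"
  then have "sorted ts" "set ts \<subseteq> {a..b}" by (simp_all add: partitions_def)
  then obtain xs ys where split: "ts = xs @ ys" "\<forall>x\<in>set xs. x \<le> m" "\<forall>y\<in>set ys. m \<le> y"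
    using sorted_split_at[where m = m] by blast
  have "xs @ [m] \<in> partitions a m" "m # ys \<in> partitions m b"
    using \<open>sorted ts\<close> \<open>set ts \<subseteq> {a..b}\<close> split assms(2,3)
    by (auto simp: partitions_def sorted_append)
  have "chain_sum d (map f ts) \<le> chain_sum d (map f xs @ f m # map f ys)"
    unfolding split(1) map_append by (rule chain_sum_insert_le[OF tri])
  also have "\<dots> = chain_sum d (map f (xs @ [m])) + chain_sum d (map f (m # ys))"
    by (subst chain_sum_append) simp
  also have "\<dots> \<le> var_length d a m f + var_length d m b f"
    by (intro add_mono chain_sum_le_var_length) fact+
  finally show "chain_sum d (map f ts) \<le> var_length d a m f + var_length d m b f" .
qed

lemma var_length_split:
  assumes "\<And>x y z. d x z \<le> d x y + d y z" and "a \<le> m" "m \<le> b"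
  shows "var_length d a b f = var_length d a m f + var_length d m b f"
  using var_length_subadditive[OF assms] var_length_superadditive[OF assms(2,3)] by (rule antisym)

lemma var_length_ge_pair: "x \<le> y \<Longrightarrow> d (f x) (f y) \<le> var_length d x y f"
  using chain_sum_le_var_length[of "[x, y]" x y d f] by (simp add: partitions_def)

lemma var_length_le_if_pairs:
  assumes "\<And>x y. a \<le> x \<Longrightarrow> x \<le> y \<Longrightarrow> y \<le> b \<Longrightarrow> d (f x) (f y) \<le> var_length d' x y F"
  shows "var_length d a b f \<le> var_length d' a b F"
  unfolding var_length_eq_SUP_chain_sum[of d a b]
proof (rule SUP_least)
  fix ts assume ts: "ts \<in> partitions a b"
  have main: "chain_sum d (map f xs) \<le> var_length d' (hd xs) (last xs) F"
    if "sorted xs" "set xs \<subseteq> {a..b}" "xs \<noteq> []" for xs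
    using that
  proof (induction xs rule: induct_list012)
    case (3 x y zs)
    then have "d (f x) (f y) \<le> var_length d' x y F" by (intro assms) auto
    moreover have "chain_sum d (map f (y # zs)) \<le> var_length d' y (last (y # zs)) F"
      using "3.IH"(2) "3.prems" by simp
    moreover have "var_length d' x y F + var_length d' y (last (y # zs)) F \<le> var_length d' x (last (y # zs)) F"
      using "3.prems"(1) by (intro var_length_superadditive) auto
    ultimately have "chain_sum d (map f (x # y # zs)) \<le> var_length d' x (last (y # zs)) F"
      by (simp add: order_trans[OF add_mono])
    then show ?case by simp
  qed (simp_all add: zero_le)
  show "chain_sum d (map f ts) \<le> var_length d' a b F"
  proof (cases "ts = []")
    case False
    with ts have "chain_sum d (map f ts) \<le> var_length d' (hd ts) (last ts) F"
      by (intro main) (simp_all add: partitions_def)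
    also have "\<dots> \<le> var_length d' a b F"
    proof -
      have "hd ts \<in> {a..b}" "last ts \<in> {a..b}"
        using ts False hd_in_set last_in_set unfolding partitions_def by blast+
      then show ?thesis by (intro var_length_subinterval) auto
    qed
    finally show ?thesis .
  qed simp
qed

section \<open>Length of curves in a metric space\<close>

abbreviation edist :: "'a::metric_space \<Rightarrow> 'a \<Rightarrow> ennreal" where
  "edist x y \<equiv> ennreal (dist x y)"

lemma edist_triangle: "edist x z \<le> edist x y + edist y z"
  by (simp add: dist_triangle flip: ennreal_plus)

lemma chain_sum_edist:
  "chain_sum edist (map f ts) = ennreal (\<Sum>i < length ts - 1. dist (f (ts ! i)) (f (ts ! Suc i)))"
  by (simp add: sum_consecutive_eq_chain_sum[symmetric] sum_ennreal)

lemma curve_length_eq_SUP_chain_sum: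
  "curve_length a b f = (SUP ts \<in> partitions a b. chain_sum edist (map f ts))"
  unfolding curve_length_def by (rule var_length_eq_SUP_chain_sum)

lemma chain_sum_edist_le_curve_length:
  "ts \<in> partitions a b \<Longrightarrow> chain_sum edist (map f ts) \<le> curve_length a b f"
  unfolding curve_length_def by (rule chain_sum_le_var_length)

lemma curve_length_split:
  "a \<le> m \<Longrightarrow> m \<le> b \<Longrightarrow> curve_length a b f = curve_length a m f + curve_length m b f"
  unfolding curve_length_def by (rule var_length_split[OF edist_triangle])

lemma curve_length_ge_dist: "a \<le> b \<Longrightarrow> edist (f a) (f b) \<le> curve_length a b f"
  unfolding curve_length_def by (rule var_length_ge_pair)

lemma abs_cont_on_subinterval:
  assumes "abs_cont_on a b f" "a \<le> t" "s \<le> b"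
  shows "abs_cont_on t s f"
  using assms unfolding abs_cont_on_def by (smt (verit, best))

lemma abs_cont_on_curve_length_small:
  assumes "abs_cont_on a b f" "\<epsilon> > 0"
  obtains \<delta> where "\<delta> > 0" "\<And>c e. a \<le> c \<Longrightarrow> e \<le> b \<Longrightarrow> e - c < \<delta> \<Longrightarrow> curve_length c e f \<le> ennreal \<epsilon>"
proof -
  obtain \<delta> where "\<delta> > 0" and \<delta>: "\<forall>(n::nat) l r.
      (\<forall>i<n. a \<le> l i \<and> l i \<le> r i \<and> r i \<le> b) \<and>
      (\<forall>i<n. \<forall>j<n. i \<noteq> j \<longrightarrow> {l i<..<r i} \<inter> {l j<..<r j} = {}) \<and>
      (\<Sum>i<n. r i - l i) < \<delta> \<longrightarrow> (\<Sum>i<n. dist (f (l i)) (f (r i))) < \<epsilon>"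
    using assms unfolding abs_cont_on_def by blast
  have "curve_length c e f \<le> ennreal \<epsilon>" if "a \<le> c" "e \<le> b" "e - c < \<delta>" for c e
    unfolding curve_length_def var_length_eq_SUP_chain_sum
  proof (rule SUP_least)
    fix ts assume "ts \<in> partitions c e"
    then have sorted: "sorted ts" and range: "\<And>i. i < length ts \<Longrightarrow> ts ! i \<in> {c..e}"
      unfolding partitions_def using nth_mem by blast+
    let ?n = "length ts - 1" and ?l = "\<lambda>i. ts ! i" and ?r = "\<lambda>i. ts ! Suc i"
    have "\<forall>i<?n. a \<le> ?l i \<and> ?l i \<le> ?r i \<and> ?r i \<le> b"
    proof (intro allI impI)
      fix i assume "i < ?n"
      then have "i < length ts" "Suc i < length ts" by auto
      then show "a \<le> ?l i \<and> ?l i \<le> ?r i \<and> ?r i \<le> b"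
        using range[of i] range[of "Suc i"] sorted_nth_mono[OF sorted, of i "Suc i"] that(1,2)
        by auto
    qed
    moreover have "\<forall>i<?n. \<forall>j<?n. i \<noteq> j \<longrightarrow> {?l i<..<?r i} \<inter> {?l j<..<?r j} = {}"
    proof (intro allI impI)
      fix i j assume "i < ?n" "j < ?n" "i \<noteq> j"
      then have "?r i \<le> ?l j \<or> ?r j \<le> ?l i"
        using sorted_nth_mono[OF sorted, of "Suc i" j] sorted_nth_mono[OF sorted, of "Suc j" i]
        by (cases "i < j") auto
      then show "{?l i<..<?r i} \<inter> {?l j<..<?r j} = {}" by auto
    qed
    moreover have "(\<Sum>i<?n. ?r i - ?l i) < \<delta>"
    proof (cases "ts = []")
      case False
      then have "(\<Sum>i<?n. ?r i - ?l i) = ts ! ?n - ts ! 0" by (intro sum_lessThan_telescope)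
      also have "\<dots> \<le> e - c" using range[of ?n] range[of 0] False by auto
      finally show ?thesis using that(3) by linarith
    qed (use \<open>\<delta> > 0\<close> in simp)
    ultimately have "(\<Sum>i<?n. dist (f (?l i)) (f (?r i))) < \<epsilon>"
      using \<delta>[rule_format, of ?n ?l ?r] by blast
    then show "chain_sum edist (map f ts) \<le> ennreal \<epsilon>"
      unfolding chain_sum_edist by (simp add: ennreal_leI)
  qed
  with \<open>\<delta> > 0\<close> show ?thesis using that by blast
qed

lemma abs_cont_on_curve_length_finite:
  assumes "abs_cont_on a b f" "a \<le> b"
  shows "curve_length a b f < top"
proof -
  obtain \<delta> where "\<delta> > 0"
    and short: "\<And>c e. a \<le> c \<Longrightarrow> e \<le> b \<Longrightarrow> e - c < \<delta> \<Longrightarrow> curve_length c e f \<le> 1"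
    using abs_cont_on_curve_length_small[OF assms(1) zero_less_one] by auto
  have bound: "curve_length a c f \<le> of_nat (Suc n)"
    if "a \<le> c" "c \<le> b" "c - a \<le> n * (\<delta> / 2)" for n c
    using that
  proof (induction n arbitrary: c)
    case 0
    then show ?case using short[of a c] \<open>\<delta> > 0\<close> by simp
  next
    case (Suc n)
    define m where "m = max a (c - \<delta> / 2)"
    have "curve_length a c f = curve_length a m f + curve_length m c f"
      by (intro curve_length_split) (use Suc.prems \<open>\<delta> > 0\<close> in \<open>auto simp: m_def\<close>)
    also have "\<dots> \<le> of_nat (Suc n) + 1"
    proof (rule add_mono)
      have "m - a \<le> n * (\<delta> / 2)"
        using Suc.prems \<open>\<delta> > 0\<close> by (auto simp: m_def max_def algebra_simps)
      then show "curve_length a m f \<le> of_nat (Suc n)"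
        by (intro Suc.IH) (use Suc.prems \<open>\<delta> > 0\<close> in \<open>auto simp: m_def\<close>)
      show "curve_length m c f \<le> 1"
        by (intro short) (use Suc.prems \<open>\<delta> > 0\<close> in \<open>auto simp: m_def\<close>)
    qed
    finally show ?case by (simp add: add.commute)
  qed
  define N where "N = nat \<lceil>(b - a) / (\<delta> / 2)\<rceil>"
  have "b - a \<le> N * (\<delta> / 2)"
    using real_nat_ceiling_ge[of "(b - a) / (\<delta> / 2)"] \<open>\<delta> > 0\<close> by (simp add: N_def pos_divide_le_eq)
  then have "curve_length a b f \<le> of_nat (Suc N)"
    using assms(2) by (intro bound) auto
  then show ?thesis using of_nat_less_top[of "Suc N"] by (rule order.strict_trans1)
qed

lemma ennreal_half_plus_half: "e \<ge> 0 \<Longrightarrow> ennreal (e / 2) + ennreal (e / 2) = ennreal e"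
  by (simp flip: ennreal_plus)

lemma chain_sum_edist_lower_semicontinuous:
  assumes "continuous_on UNIV u" "e > 0"
  shows "\<exists>\<delta>>0. \<forall>h. (\<forall>x\<in>set ts. dist (h x) (g x) < \<delta>) \<longrightarrow>
           chain_sum edist (map (u \<circ> g) ts) \<le> chain_sum edist (map (u \<circ> h) ts) + ennreal e"
  using assms(2)
proof (induction ts arbitrary: e rule: induct_list012)
  case (3 x y zs)
  have "e / 2 > 0" using "3.prems" by simp
  then obtain \<delta> where "\<delta> > 0" and \<delta>: "\<forall>h. (\<forall>x\<in>set (y # zs). dist (h x) (g x) < \<delta>) \<longrightarrow>
      chain_sum edist (map (u \<circ> g) (y # zs)) \<le> chain_sum edist (map (u \<circ> h) (y # zs)) + ennreal (e / 2)"
    by (blast dest: "3.IH"(2))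
  have "\<exists>\<delta>>0. \<forall>z. dist z (g w) < \<delta> \<longrightarrow> dist (u z) (u (g w)) < e / 4" for w
    using assms(1)[unfolded continuous_on_iff, rule_format, of "g w" "e / 4"] "3.prems" by auto
  then obtain \<delta>x \<delta>y where "\<delta>x > 0" "\<delta>y > 0"
    and \<delta>x: "\<And>z. dist z (g x) < \<delta>x \<Longrightarrow> dist (u z) (u (g x)) < e / 4"
    and \<delta>y: "\<And>z. dist z (g y) < \<delta>y \<Longrightarrow> dist (u z) (u (g y)) < e / 4"
    by meson
  have main: "chain_sum edist (map (u \<circ> g) (x # y # zs)) \<le> chain_sum edist (map (u \<circ> h) (x # y # zs)) + ennreal e"
    if close: "\<forall>w\<in>set (x # y # zs). dist (h w) (g w) < min \<delta> (min \<delta>x \<delta>y)" for h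
  proof -
    have "dist (u (g x)) (u (g y)) \<le> dist (u (h x)) (u (g x)) + dist (u (h x)) (u (h y)) + dist (u (h y)) (u (g y))"
      by metric
    also have "\<dots> \<le> dist (u (h x)) (u (h y)) + e / 2"
      using \<delta>x[of "h x"] \<delta>y[of "h y"] close by simp
    finally have "edist (u (g x)) (u (g y)) \<le> edist (u (h x)) (u (h y)) + ennreal (e / 2)"
      using "3.prems" by (simp flip: ennreal_plus)
    moreover have "chain_sum edist (map (u \<circ> g) (y # zs)) \<le> chain_sum edist (map (u \<circ> h) (y # zs)) + ennreal (e / 2)"
      using \<delta> close by simp
    ultimately have "chain_sum edist (map (u \<circ> g) (x # y # zs)) \<le>
        (edist (u (h x)) (u (h y)) + ennreal (e / 2)) +
        (chain_sum edist (map (u \<circ> h) (y # zs)) + ennreal (e / 2))"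
      by (simp only: list.map chain_sum.simps comp_apply add_mono)
    also have "\<dots> = chain_sum edist (map (u \<circ> h) (x # y # zs)) + (ennreal (e / 2) + ennreal (e / 2))"
      by (simp add: ac_simps)
    finally show ?thesis using "3.prems" by (simp add: ennreal_half_plus_half)
  qed
  show ?case
  proof (intro exI[of _ "min \<delta> (min \<delta>x \<delta>y)"] conjI allI impI)
    show "min \<delta> (min \<delta>x \<delta>y) > 0" using \<open>\<delta> > 0\<close> \<open>\<delta>x > 0\<close> \<open>\<delta>y > 0\<close> by simp
  qed (rule main)
qed (auto intro: exI[of _ 1])

lemma curve_length_lower_semicontinuous:
  assumes "continuous_on UNIV u" "curve_length a b (u \<circ> g) < top" "e > 0"
  obtains \<delta> where "\<delta> > 0"
    "\<And>h. \<forall>x\<in>{a..b}. dist (h x) (g x) < \<delta> \<Longrightarrow> curve_length a b (u \<circ> g) \<le> curve_length a b (u \<circ> h) + ennreal e"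
proof -
  have "e / 2 > 0" using assms(3) by simp
  moreover have "partitions a b \<noteq> {}" by (auto simp: partitions_def intro!: exI[of _ "[]"])
  moreover have "curve_length a b (u \<circ> g) \<noteq> \<infinity>"
    using assms(2) by (simp add: infinity_ennreal_def)
  ultimately obtain ts where "ts \<in> partitions a b"
    and ts: "curve_length a b (u \<circ> g) < chain_sum edist (map (u \<circ> g) ts) + ennreal (e / 2)"
    using SUP_approx_ennreal[OF _ _ curve_length_eq_SUP_chain_sum] by blast
  obtain \<delta> where "\<delta> > 0" and \<delta>: "\<forall>h. (\<forall>x\<in>set ts. dist (h x) (g x) < \<delta>) \<longrightarrow>
      chain_sum edist (map (u \<circ> g) ts) \<le> chain_sum edist (map (u \<circ> h) ts) + ennreal (e / 2)"
    using chain_sum_edist_lower_semicontinuous[OF assms(1), of "e / 2" ts g] assms(3) by auto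
  have "curve_length a b (u \<circ> g) \<le> curve_length a b (u \<circ> h) + ennreal e"
    if "\<forall>x\<in>{a..b}. dist (h x) (g x) < \<delta>" for h
  proof -
    have "\<forall>x\<in>set ts. dist (h x) (g x) < \<delta>"
      using that \<open>ts \<in> partitions a b\<close> by (auto simp: partitions_def)
    then have "curve_length a b (u \<circ> g) \<le> chain_sum edist (map (u \<circ> h) ts) + ennreal (e / 2) + ennreal (e / 2)"
      using ts \<delta> by (meson add_right_mono less_imp_le order_trans)
    also have "\<dots> \<le> curve_length a b (u \<circ> h) + ennreal e"
      using chain_sum_edist_le_curve_length[OF \<open>ts \<in> partitions a b\<close>] assms(3)
      by (simp add: add.assoc ennreal_half_plus_half add_right_mono)
    finally show ?thesis .
  qed
  with \<open>\<delta> > 0\<close> show ?thesis using that by blast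
qed

lemma curve_length_middle_le:
  assumes u: "continuous_on UNIV u" and fin: "curve_length a b (u \<circ> g) < top" and "e > 0"
    and "a \<le> t" "t \<le> s" "s \<le> b"
  obtains \<delta> where "\<delta> > 0"
    "\<And>h. \<forall>x\<in>{a..b}. dist (h x) (g x) < \<delta> \<Longrightarrow>
       curve_length a b (u \<circ> h) \<le> curve_length a b (u \<circ> g) + ennreal e \<Longrightarrow>
       curve_length t s (u \<circ> h) \<le> curve_length t s (u \<circ> g) + ennreal (3 * e)"
proof -
  have split: "curve_length a b F = curve_length a t F + curve_length t s F + curve_length s b F" for F
    using assms(4-6) curve_length_split[of a t b F] curve_length_split[of t s b F] by (simp add: add.assoc)
  have fin_outer: "curve_length a t (u \<circ> g) < top" "curve_length s b (u \<circ> g) < top"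
    using fin unfolding split[of "u \<circ> g"] by (simp_all add: top.not_eq_extremum)
  obtain \<delta>a where "\<delta>a > 0" and \<delta>a: "\<And>h. \<forall>x\<in>{a..t}. dist (h x) (g x) < \<delta>a \<Longrightarrow>
      curve_length a t (u \<circ> g) \<le> curve_length a t (u \<circ> h) + ennreal e"
    using curve_length_lower_semicontinuous[OF u fin_outer(1) \<open>e > 0\<close>] by blast
  obtain \<delta>b where "\<delta>b > 0" and \<delta>b: "\<And>h. \<forall>x\<in>{s..b}. dist (h x) (g x) < \<delta>b \<Longrightarrow>
      curve_length s b (u \<circ> g) \<le> curve_length s b (u \<circ> h) + ennreal e"
    using curve_length_lower_semicontinuous[OF u fin_outer(2) \<open>e > 0\<close>] by blast
  have "curve_length t s (u \<circ> h) \<le> curve_length t s (u \<circ> g) + ennreal (3 * e)"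
    if close: "\<forall>x\<in>{a..b}. dist (h x) (g x) < min \<delta>a \<delta>b"
      and short: "curve_length a b (u \<circ> h) \<le> curve_length a b (u \<circ> g) + ennreal e" for h
  proof -
    let ?A = "curve_length a t (u \<circ> g)" and ?S = "curve_length s b (u \<circ> g)"
    have "?A + ?S + curve_length t s (u \<circ> h) \<le>
        (curve_length a t (u \<circ> h) + ennreal e) + (curve_length s b (u \<circ> h) + ennreal e) + curve_length t s (u \<circ> h)"
      using close assms(4-6) by (intro add_mono \<delta>a \<delta>b order_refl) auto
    also have "\<dots> = curve_length a b (u \<circ> h) + (ennreal e + ennreal e)"
      unfolding split[of "u \<circ> h"] by (simp add: ac_simps)
    also have "\<dots> \<le> curve_length a b (u \<circ> g) + ennreal e + (ennreal e + ennreal e)"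
      using short by (rule add_right_mono)
    also have "\<dots> = ?A + ?S + (curve_length t s (u \<circ> g) + ennreal (3 * e))"
      using \<open>e > 0\<close> unfolding split[of "u \<circ> g"] by (simp add: ac_simps flip: ennreal_plus)
    finally show ?thesis
      using fin_outer by (auto simp: ennreal_add_left_cancel_le ennreal_add_eq_top add.assoc)
  qed
  with \<open>\<delta>a > 0\<close> \<open>\<delta>b > 0\<close> show ?thesis using that[of "min \<delta>a \<delta>b"] by simp
qed

section \<open>Restriction, reparametrisation and modulus of curve families\<close>

lemma lip_curve_subinterval:
  assumes "lip_curve (a, b, g)" "a \<le> t" "t \<le> s" "s \<le> b"
  shows "lip_curve (t, s, g)"
  using assms lipschitz_on_subset[of _ "{a..b}" g "{t..s}"] unfolding lip_curve_def by auto

lemma affine_param_mem: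
  fixes t s x :: real
  shows "t \<le> s \<Longrightarrow> x \<in> {0..1} \<Longrightarrow> t + (s - t) * x \<in> {t..s}"
  using mult_left_le[of x "s - t"] by auto

lemma lip_curve_affine_reparam:
  assumes "lip_curve (t, s, h)"
  shows "lip_curve (0, 1, \<lambda>x. h (t + (s - t) * x))"
proof -
  obtain K where "t \<le> s" and K: "K-lipschitz_on {t..s} h"
    using assms unfolding lip_curve_def by auto
  have "(s - t)-lipschitz_on {0..1} (\<lambda>x. t + (s - t) * x)"
    using \<open>t \<le> s\<close> by (intro lipschitz_onI) (auto simp: dist_real_def abs_mult simp flip: right_diff_distrib)
  moreover have "K-lipschitz_on ((\<lambda>x. t + (s - t) * x) ` {0..1}) h"
    using K affine_param_mem[OF \<open>t \<le> s\<close>] by (blast intro: lipschitz_on_subset)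
  ultimately have "(K * (s - t))-lipschitz_on {0..1} (\<lambda>x. h (t + (s - t) * x))"
    by (rule lipschitz_on_compose2)
  then show ?thesis unfolding lip_curve_def by auto
qed

lemma curve_length_affine_reparam_le:
  assumes "t \<le> s"
  shows "curve_length 0 1 (\<lambda>x. f (t + (s - t) * x)) \<le> curve_length t s f"
  unfolding curve_length_eq_SUP_chain_sum[of 0 1]
proof (rule SUP_least)
  fix ts assume ts: "ts \<in> partitions 0 1"
  define \<phi> where "\<phi> x = t + (s - t) * x" for x
  have "mono \<phi>" using assms by (auto simp: \<phi>_def mono_def mult_left_mono)
  have "map \<phi> ts \<in> partitions t s"
  proof -
    have "sorted_wrt (\<lambda>x y. \<phi> x \<le> \<phi> y) ts"
      by (rule sorted_wrt_mono_rel[of _ "(\<le>)"]) (use ts \<open>mono \<phi>\<close> in \<open>auto simp: partitions_def monoD\<close>)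
    moreover have "set (map \<phi> ts) \<subseteq> {t..s}"
      using ts affine_param_mem[OF assms] by (auto simp: partitions_def \<phi>_def)
    ultimately show ?thesis by (simp add: partitions_def sorted_map)
  qed
  then have "chain_sum edist (map f (map \<phi> ts)) \<le> curve_length t s f"
    by (rule chain_sum_edist_le_curve_length)
  then show "chain_sum edist (map (\<lambda>x. f (t + (s - t) * x)) ts) \<le> curve_length t s f"
    by (simp add: \<phi>_def comp_def)
qed

lemma curve_ballE:
  assumes "c \<in> curve_ball (a, b, g) \<delta>"
  obtains h where "c = (a, b, h)" "lip_curve (a, b, h)" "\<And>x. x \<in> {a..b} \<Longrightarrow> dist (h x) (g x) < \<delta>"
proof -
  obtain h where h: "c = (a, b, h)" "lip_curve (a, b, h)"
    and sup: "(SUP x\<in>{a..b}. ereal (dist (h x) (g x))) < ereal \<delta>"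
    using assms unfolding curve_ball_def by auto
  have "dist (h x) (g x) < \<delta>" if "x \<in> {a..b}" for x
    using order.strict_trans1[OF SUP_upper[OF that] sup] by simp
  with h show ?thesis using that by blast
qed

lemma curve_ball_mono: "\<delta> \<le> \<delta>' \<Longrightarrow> curve_ball c \<delta> \<subseteq> curve_ball c \<delta>'"
  unfolding curve_ball_def by (force split: prod.splits intro: order.strict_trans2[of _ "ereal \<delta>"])

lemma curve_ball_subinterval:
  assumes "(a, b, h) \<in> curve_ball (a, b, g) \<delta>" "a \<le> t" "t \<le> s" "s \<le> b"
  shows "(t, s, h) \<in> curve_ball (t, s, g) \<delta>"
proof -
  have lip: "lip_curve (a, b, h)" and sup: "(SUP x\<in>{a..b}. ereal (dist (h x) (g x))) < ereal \<delta>"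
    using assms(1) unfolding curve_ball_def by auto
  from lip assms(2-4) have "lip_curve (t, s, h)" by (rule lip_curve_subinterval)
  moreover have "(SUP x\<in>{t..s}. ereal (dist (h x) (g x))) < ereal \<delta>"
    using assms(2,4) by (intro order.strict_trans1[OF SUP_subset_mono sup]) auto
  ultimately show ?thesis unfolding curve_ball_def by auto
qed

lemma p_modulus_empty: "p_modulus \<mu> p {} = 0"
proof -
  have "p_modulus \<mu> p {} \<le> (\<integral>\<^sup>+x. enn_powr 0 p \<partial>\<mu>)"
    unfolding p_modulus_def by (rule INF_lower[where f = "\<lambda>\<rho>. \<integral>\<^sup>+x. enn_powr (\<rho> x) p \<partial>\<mu>", of "\<lambda>_. 0"]) simp
  then show ?thesis by (simp add: enn_powr_def)
qed

lemma p_modulus_mono_minorized: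
  assumes "\<And>c'. c' \<in> \<Gamma>' \<Longrightarrow> \<exists>c\<in>\<Gamma>. \<forall>\<rho>. line_integral \<rho> c \<le> line_integral \<rho> c'"
  shows "p_modulus \<mu> p \<Gamma>' \<le> p_modulus \<mu> p \<Gamma>"
  unfolding p_modulus_def
proof (rule INF_superset_mono)
  show "{\<rho>. \<rho> \<in> borel_measurable borel \<and> (\<forall>c\<in>\<Gamma>. 1 \<le> line_integral \<rho> c)}
      \<subseteq> {\<rho>. \<rho> \<in> borel_measurable borel \<and> (\<forall>c\<in>\<Gamma>'. 1 \<le> line_integral \<rho> c)}"
    using assms by (fastforce intro: order_trans)
qed simp

lemma line_integral_subinterval:
  "a \<le> t \<Longrightarrow> s \<le> b \<Longrightarrow> line_integral \<rho> (t, s, h) \<le> line_integral \<rho> (a, b, h)"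
  unfolding line_integral_def
  by (auto intro!: nn_integral_mono mult_left_mono split: split_indicator)

lemma e2ennreal_ereal_mult:
  assumes "c > 0"
  shows "e2ennreal (ereal c * X) = ennreal c * e2ennreal X"
proof (cases X)
  case (real r)
  with assms show ?thesis
    by (cases "r \<ge> 0") (simp_all add: ennreal_mult mult_nonneg_nonpos ennreal_neg)
qed (use assms in \<open>simp_all add: ennreal_mult_top e2ennreal_neg\<close>)

lemma filtermap_times_at_0:
  assumes "(c::real) \<noteq> 0"
  shows "filtermap (\<lambda>k. c * k) (at 0) = at 0"
proof (rule filtermap_fun_inverse[where g = "\<lambda>x. x / c"])
  show "filterlim (\<lambda>x. x / c) (at 0) (at 0)" "filterlim (\<lambda>k. c * k) (at 0) (at 0)"
    by (auto intro!: filterlim_atI tendsto_eq_intros simp: assms eventually_at_filter)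
qed (use assms in simp)

lemma metric_speed_affine:
  assumes "c > 0"
  shows "metric_speed (\<lambda>x. h (t + c * x)) x = ennreal c * metric_speed h (t + c * x)"
proof -
  define q where "q k = ereal (dist (h (t + c * x + k)) (h (t + c * x)) / \<bar>k\<bar>)" for k
  have "ereal (dist (h (t + c * (x + k))) (h (t + c * x)) / \<bar>k\<bar>) = ereal c * q (c * k)" for k
    using assms by (cases "k = 0") (simp_all add: q_def abs_mult algebra_simps)
  then have "Limsup (at 0) (\<lambda>k. ereal (dist (h (t + c * (x + k))) (h (t + c * x)) / \<bar>k\<bar>))
      = ereal c * Limsup (at 0) (\<lambda>k. q (c * k))"
    using assms by (simp add: Limsup_ereal_mult_left)
  also have "Limsup (at 0) (\<lambda>k. q (c * k)) = Limsup (at 0) q"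
    using Limsup_filtermap_eq[of "\<lambda>k. c * k" "at 0" q] assms
    by (simp add: inj_on_def filtermap_times_at_0)
  finally show ?thesis
    unfolding metric_speed_def q_def using assms by (simp add: e2ennreal_ereal_mult)
qed

lemma nn_integral_lborel_affine_le:
  fixes G :: "real \<Rightarrow> ennreal"
  assumes "c > 0"
  shows "(\<integral>\<^sup>+x. G (t + c * x) * ennreal c \<partial>lborel) \<le> (\<integral>\<^sup>+y. G y \<partial>lborel)"
  unfolding nn_integral_def[of lborel "\<lambda>x. G (t + c * x) * ennreal c"]
proof (rule SUP_least)
  fix \<sigma> assume "\<sigma> \<in> {g. simple_function lborel g \<and> g \<le> (\<lambda>x. G (t + c * x) * ennreal c)}"
  then have simple: "simple_function lborel \<sigma>" and le: "\<And>x. \<sigma> x \<le> G (t + c * x) * ennreal c"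
    by (auto simp: le_fun_def)
  have "\<sigma> \<in> borel_measurable borel"
    using borel_measurable_simple_function[OF simple] by simp
  define \<tau> where "\<tau> y = \<sigma> ((y - t) / c) * ennreal (1 / c)" for y
  have \<tau>_measurable: "\<tau> \<in> borel_measurable borel"
    unfolding \<tau>_def using \<open>\<sigma> \<in> borel_measurable borel\<close> by measurable
  have inverse: "ennreal c * ennreal (1 / c) = 1" using assms by (simp flip: ennreal_mult)
  have "integral\<^sup>S lborel \<sigma> = ennreal c * ((\<integral>\<^sup>+x. \<sigma> x \<partial>lborel) * ennreal (1 / c))"
    using nn_integral_eq_simple_integral[OF simple] inverse by (metis mult.left_commute mult_1_right)
  also have "\<dots> = ennreal c * (\<integral>\<^sup>+x. \<tau> (t + c * x) \<partial>lborel)"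
    unfolding \<tau>_def using assms \<open>\<sigma> \<in> borel_measurable borel\<close> by (simp add: nn_integral_multc)
  also have "\<dots> = (\<integral>\<^sup>+y. \<tau> y \<partial>lborel)"
    using nn_integral_real_affine[OF \<tau>_measurable, of c t] assms by simp
  also have "\<dots> \<le> (\<integral>\<^sup>+y. G y \<partial>lborel)"
  proof (rule nn_integral_mono)
    fix y
    have "\<tau> y \<le> G y * ennreal c * ennreal (1 / c)"
      unfolding \<tau>_def using le[of "(y - t) / c"] assms by (intro mult_right_mono) simp_all
    then show "\<tau> y \<le> G y" by (simp add: mult.assoc inverse)
  qed
  finally show "integral\<^sup>S lborel \<sigma> \<le> (\<integral>\<^sup>+y. G y \<partial>lborel)" .
qed

lemma metric_speed_const: "metric_speed (\<lambda>_. z) t = 0"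
  unfolding metric_speed_def by (simp add: Limsup_const e2ennreal_neg)

lemma line_integral_affine_reparam:
  assumes "t \<le> s"
  shows "line_integral \<rho> (0, 1, \<lambda>x. h (t + (s - t) * x)) \<le> line_integral \<rho> (t, s, h)"
proof (cases "t = s")
  case True
  then show ?thesis by (simp add: line_integral_def metric_speed_const)
next
  case False
  define c where "c = s - t"
  have "c > 0" using assms False by (simp add: c_def)
  define G where "G y = \<rho> (h y) * metric_speed h y * indicator {t..s} y" for y
  have "x \<in> {0..1} \<longleftrightarrow> t + c * x \<in> {t..s}" for x
  proof -
    have "t + c * x \<le> s \<longleftrightarrow> c * x \<le> c * 1"
      using c_def by (simp add: add.commute le_diff_eq)
    also have "\<dots> \<longleftrightarrow> x \<le> 1" using \<open>c > 0\<close> by (rule mult_le_cancel_left_pos)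
    finally show ?thesis using \<open>c > 0\<close> by (auto simp: zero_le_mult_iff)
  qed
  then have "indicator {0..1} x = (indicator {t..s} (t + c * x) :: ennreal)" for x
    by (simp add: indicator_def)
  then have "line_integral \<rho> (0, 1, \<lambda>x. h (t + c * x)) = (\<integral>\<^sup>+x. G (t + c * x) * ennreal c \<partial>lborel)"
    unfolding line_integral_def G_def prod.case
    by (intro nn_integral_cong) (simp only: metric_speed_affine[OF \<open>c > 0\<close>], simp add: ac_simps)
  also have "\<dots> \<le> (\<integral>\<^sup>+y. G y \<partial>lborel)"
    by (rule nn_integral_lborel_affine_le[OF \<open>c > 0\<close>])
  also have "\<dots> = line_integral \<rho> (t, s, h)"
    unfolding line_integral_def G_def by simp
  finally show ?thesis unfolding c_def .
qed

section \<open>Regular curves\<close>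

lemma INF_curve_length_le_ess_len:
  "(INF c\<in>\<Gamma>. case c of (a, b, \<gamma>) \<Rightarrow> curve_length a b (u \<circ> \<gamma>)) \<le> ess_len \<mu> p u \<Gamma>"
  unfolding ess_len_def by (rule SUP_upper2[of "{}"]) (auto simp: p_modulus_empty)

lemma ess_len_antimono: "\<Gamma> \<subseteq> \<Gamma>' \<Longrightarrow> ess_len \<mu> p u \<Gamma>' \<le> ess_len \<mu> p u \<Gamma>"
  unfolding ess_len_def by (intro SUP_mono) (blast intro: INF_superset_mono)

lemma regular_curve_approx:
  assumes "regular_curve \<mu> p u (a, b, g)" "p_modulus \<mu> p \<Gamma> = 0" "\<delta> > 0"
    and "curve_length a b (u \<circ> g) < x"
  obtains h where "(a, b, h) \<in> curve_ball (a, b, g) \<delta>" "(a, b, h) \<notin> \<Gamma>" "curve_length a b (u \<circ> h) < x"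
proof -
  have "(INF c\<in>curve_ball (a, b, g) \<delta> - \<Gamma>. case c of (a, b, \<gamma>) \<Rightarrow> curve_length a b (u \<circ> \<gamma>))
      \<le> ess_len \<mu> p u (curve_ball (a, b, g) \<delta>)"
    unfolding ess_len_def using assms(2) by (intro SUP_upper) simp
  also have "\<dots> \<le> curve_length a b (u \<circ> g)"
    using assms(1,3) unfolding regular_curve_def by simp
  finally have "(INF c\<in>curve_ball (a, b, g) \<delta> - \<Gamma>. case c of (a, b, \<gamma>) \<Rightarrow> curve_length a b (u \<circ> \<gamma>)) < x"
    using assms(4) by (rule order.strict_trans1)
  then obtain c where c: "c \<in> curve_ball (a, b, g) \<delta>" "c \<notin> \<Gamma>"
    and "(case c of (a, b, \<gamma>) \<Rightarrow> curve_length a b (u \<circ> \<gamma>)) < x"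
    unfolding INF_less_iff by blast
  moreover obtain h where "c = (a, b, h)" using c(1) by (rule curve_ballE)
  ultimately show ?thesis using that by auto
qed

lemma regular_curve_subinterval:
  assumes u: "continuous_on UNIV u" and reg: "regular_curve \<mu> p u (a, b, g)"
    and "a \<le> t" "t \<le> s" "s \<le> b"
  shows "regular_curve \<mu> p u (t, s, g)"
proof -
  have "lip_curve (a, b, g)" and abs_cont: "abs_cont_on a b (u \<circ> g)"
    using reg unfolding regular_curve_def by auto
  then have "a \<le> b" unfolding lip_curve_def by simp
  have fin: "curve_length a b (u \<circ> g) < top"
    using abs_cont \<open>a \<le> b\<close> by (rule abs_cont_on_curve_length_finite)
  have "ess_len \<mu> p u (curve_ball (t, s, g) \<delta>) \<le> curve_length t s (u \<circ> g)" if "\<delta> > 0" for \<delta>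
    unfolding ess_len_def
  proof (rule SUP_least)
    fix \<Gamma> assume "\<Gamma> \<in> {\<Gamma>. p_modulus \<mu> p \<Gamma> = 0}"
    define \<Gamma>' where "\<Gamma>' = {(a, b, h) | h. (t, s, h) \<in> \<Gamma>}"
    have "p_modulus \<mu> p \<Gamma>' \<le> p_modulus \<mu> p \<Gamma>"
      unfolding \<Gamma>'_def using assms(3,5)
      by (intro p_modulus_mono_minorized) (blast intro: line_integral_subinterval)
    with \<open>\<Gamma> \<in> _\<close> have null: "p_modulus \<mu> p \<Gamma>' = 0" by simp
    show "(INF c\<in>curve_ball (t, s, g) \<delta> - \<Gamma>. case c of (a, b, \<gamma>) \<Rightarrow> curve_length a b (u \<circ> \<gamma>))
        \<le> curve_length t s (u \<circ> g)"
    proof (rule ennreal_le_epsilon)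
      fix e :: real assume "e > 0"
      then obtain \<delta>' where "\<delta>' > 0" and middle: "\<And>h. \<forall>x\<in>{a..b}. dist (h x) (g x) < \<delta>' \<Longrightarrow>
          curve_length a b (u \<circ> h) \<le> curve_length a b (u \<circ> g) + ennreal (e / 3) \<Longrightarrow>
          curve_length t s (u \<circ> h) \<le> curve_length t s (u \<circ> g) + ennreal (3 * (e / 3))"
        using curve_length_middle_le[OF u fin _ assms(3-5), of "e / 3"] by auto
      have "curve_length a b (u \<circ> g) < curve_length a b (u \<circ> g) + ennreal (e / 3)"
        using fin \<open>e > 0\<close> by (simp add: ennreal_add_left_cancel_less top.not_eq_extremum)
      then obtain h where ball: "(a, b, h) \<in> curve_ball (a, b, g) (min \<delta> \<delta>')" and "(a, b, h) \<notin> \<Gamma>'"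
        and short: "curve_length a b (u \<circ> h) < curve_length a b (u \<circ> g) + ennreal (e / 3)"
        using regular_curve_approx[OF reg null] \<open>\<delta> > 0\<close> \<open>\<delta>' > 0\<close> by (metis min_less_iff_conj)
      have "(t, s, h) \<in> curve_ball (t, s, g) \<delta> - \<Gamma>"
        using curve_ball_subinterval[OF ball assms(3-5)] curve_ball_mono[of "min \<delta> \<delta>'" \<delta>]
          \<open>(a, b, h) \<notin> \<Gamma>'\<close> by (auto simp: \<Gamma>'_def)
      then have "(INF c\<in>curve_ball (t, s, g) \<delta> - \<Gamma>. case c of (a, b, \<gamma>) \<Rightarrow> curve_length a b (u \<circ> \<gamma>))
          \<le> curve_length t s (u \<circ> h)"
        by (rule INF_lower2) simp
      also have "\<dots> \<le> curve_length t s (u \<circ> g) + ennreal e"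
        using middle[of h] ball short by (auto elim!: curve_ballE)
      finally show "(INF c\<in>curve_ball (t, s, g) \<delta> - \<Gamma>. case c of (a, b, \<gamma>) \<Rightarrow> curve_length a b (u \<circ> \<gamma>))
          \<le> curve_length t s (u \<circ> g) + ennreal e" .
    qed
  qed
  moreover have "lip_curve (t, s, g)"
    using \<open>lip_curve (a, b, g)\<close> assms(3-5) by (rule lip_curve_subinterval)
  moreover have "abs_cont_on t s (u \<circ> g)"
    using abs_cont assms(3,5) by (rule abs_cont_on_subinterval)
  ultimately show ?thesis unfolding regular_curve_def by simp
qed

section \<open>The distances d' and d_{u,p}\<close>

lemma antimono_tendsto_at_right_0_SUP:
  fixes f :: "real \<Rightarrow> 'a::{complete_linorder, linorder_topology}"
  assumes anti: "\<And>x y. 0 < x \<Longrightarrow> x \<le> y \<Longrightarrow> f y \<le> f x"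
  shows "(f \<longlongrightarrow> (SUP x\<in>{0<..}. f x)) (at_right 0)"
proof (rule order_tendstoI)
  fix z assume "z < (SUP x\<in>{0<..}. f x)"
  then obtain x0 where "x0 > 0" "z < f x0" by (auto simp: less_SUP_iff)
  then show "eventually (\<lambda>x. z < f x) (at_right 0)"
    unfolding eventually_at_right_field using anti by (meson less_imp_le order.strict_trans2)
next
  fix z assume "(SUP x\<in>{0<..}. f x) < z"
  moreover have "f x \<le> (SUP x\<in>{0<..}. f x)" if "x > 0" for x
    using that by (intro SUP_upper) simp
  ultimately show "eventually (\<lambda>x. f x < z) (at_right 0)"
    unfolding eventually_at_right_field by (meson le_less_trans zero_less_one)
qed

lemma curves_between_mono:
  "\<delta> \<le> \<delta>' \<Longrightarrow> curves_between (cball x \<delta>) (cball y \<delta>) \<subseteq> curves_between (cball x \<delta>') (cball y \<delta>')"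
  unfolding curves_between_def by auto

lemma d_prime_eq_SUP:
  "d_prime \<mu> p u x y = (SUP \<delta>\<in>{0<..}. ess_len \<mu> p u (curves_between (cball x \<delta>) (cball y \<delta>)))"
  unfolding d_prime_def
  by (intro tendsto_Lim antimono_tendsto_at_right_0_SUP ess_len_antimono curves_between_mono) simp_all

lemma dist_le_d_prime:
  assumes u: "continuous_on UNIV u"
  shows "edist (u x) (u y) \<le> d_prime \<mu> p u x y"
proof (rule ennreal_le_epsilon)
  fix e :: real assume "e > 0"
  have "\<exists>\<delta>>0. \<forall>z. dist z w < \<delta> \<longrightarrow> dist (u z) (u w) < e / 2" for w
    using u[unfolded continuous_on_iff, rule_format, of w "e / 2"] \<open>e > 0\<close> by auto
  then obtain \<delta>x \<delta>y where "\<delta>x > 0" "\<delta>y > 0"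
    and \<delta>x: "\<And>z. dist z x < \<delta>x \<Longrightarrow> dist (u z) (u x) < e / 2"
    and \<delta>y: "\<And>z. dist z y < \<delta>y \<Longrightarrow> dist (u z) (u y) < e / 2"
    by meson
  define \<delta> where "\<delta> = min \<delta>x \<delta>y / 2"
  have "\<delta> > 0" using \<open>\<delta>x > 0\<close> \<open>\<delta>y > 0\<close> by (simp add: \<delta>_def)
  have "edist (u x) (u y) - ennreal e \<le> (case c of (a, b, \<gamma>) \<Rightarrow> curve_length a b (u \<circ> \<gamma>))"
    if "c \<in> curves_between (cball x \<delta>) (cball y \<delta>)" for c
  proof -
    from that obtain h where c: "c = (0, 1, h)" and "dist x (h 0) \<le> \<delta>" "dist y (h 1) \<le> \<delta>"
      unfolding curves_between_def by auto
    then have "dist (u (h 0)) (u x) < e / 2" "dist (u (h 1)) (u y) < e / 2"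
      using \<delta>x[of "h 0"] \<delta>y[of "h 1"] \<open>\<delta>x > 0\<close> \<open>\<delta>y > 0\<close> by (auto simp: \<delta>_def dist_commute)
    moreover have "dist (u x) (u y) \<le> dist (u (h 0)) (u x) + dist (u (h 0)) (u (h 1)) + dist (u (h 1)) (u y)"
      by metric
    ultimately have "edist (u x) (u y) \<le> ennreal e + edist (u (h 0)) (u (h 1))"
      using \<open>e > 0\<close> by (simp flip: ennreal_plus)
    also have "\<dots> \<le> ennreal e + curve_length 0 1 (u \<circ> h)"
      using curve_length_ge_dist[of 0 1 "u \<circ> h"] by (simp add: add_left_mono)
    finally show ?thesis unfolding c by (simp add: ennreal_minus_le_iff)
  qed
  then have "edist (u x) (u y) - ennreal e \<le> ess_len \<mu> p u (curves_between (cball x \<delta>) (cball y \<delta>))"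
    by (blast intro: INF_greatest order_trans[OF _ INF_curve_length_le_ess_len])
  also have "\<dots> \<le> d_prime \<mu> p u x y"
    unfolding d_prime_eq_SUP using \<open>\<delta> > 0\<close> by (intro SUP_upper) simp
  finally show "edist (u x) (u y) \<le> d_prime \<mu> p u x y + ennreal e"
    by (simp add: ennreal_minus_le_iff add.commute)
qed

lemma d_up_eq_INF_chain_sum: "d_up \<mu> p u x y = (INF zs. chain_sum (d_prime \<mu> p u) (x # zs @ [y]))"
  unfolding d_up_def Let_def sum_consecutive_eq_chain_sum ..

lemma d_up_le_d_prime: "d_up \<mu> p u x y \<le> d_prime \<mu> p u x y"
  unfolding d_up_eq_INF_chain_sum by (rule INF_lower2[of "[]"]) simp_all

lemma dist_le_d_up:
  assumes "continuous_on UNIV u"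
  shows "edist (u x) (u y) \<le> d_up \<mu> p u x y"
  unfolding d_up_eq_INF_chain_sum
proof (rule INF_greatest)
  fix zs
  have "edist (u x) (u y) \<le> chain_sum (\<lambda>x y. edist (u x) (u y)) (x # zs @ [y])"
    by (rule chain_sum_ge_ends) (rule edist_triangle)
  also have "\<dots> \<le> chain_sum (d_prime \<mu> p u) (x # zs @ [y])"
    using dist_le_d_prime[OF assms] by (rule chain_sum_mono)
  finally show "edist (u x) (u y) \<le> chain_sum (d_prime \<mu> p u) (x # zs @ [y])" .
qed

lemma d_prime_le_curve_length:
  assumes reg: "regular_curve \<mu> p u (t, s, g)"
  shows "d_prime \<mu> p u (g t) (g s) \<le> curve_length t s (u \<circ> g)"
  unfolding d_prime_eq_SUP
proof (intro SUP_least)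
  fix \<delta> :: real assume "\<delta> \<in> {0<..}"
  have "t \<le> s" using reg unfolding regular_curve_def lip_curve_def by simp
  show "ess_len \<mu> p u (curves_between (cball (g t) \<delta>) (cball (g s) \<delta>)) \<le> curve_length t s (u \<circ> g)"
    unfolding ess_len_def
  proof (rule SUP_least)
    fix \<Gamma> assume "\<Gamma> \<in> {\<Gamma>. p_modulus \<mu> p \<Gamma> = 0}"
    define \<Gamma>' where "\<Gamma>' = {(t, s, h) | h. (0, 1, \<lambda>x. h (t + (s - t) * x)) \<in> \<Gamma>}"
    have "p_modulus \<mu> p \<Gamma>' \<le> p_modulus \<mu> p \<Gamma>"
      unfolding \<Gamma>'_def using \<open>t \<le> s\<close>
      by (intro p_modulus_mono_minorized) (blast intro: line_integral_affine_reparam)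
    with \<open>\<Gamma> \<in> _\<close> have null: "p_modulus \<mu> p \<Gamma>' = 0" by simp
    show "(INF c\<in>curves_between (cball (g t) \<delta>) (cball (g s) \<delta>) - \<Gamma>.
        case c of (a, b, \<gamma>) \<Rightarrow> curve_length a b (u \<circ> \<gamma>)) \<le> curve_length t s (u \<circ> g)"
    proof (rule ennreal_le_epsilon)
      fix e :: real assume "curve_length t s (u \<circ> g) < top" and "e > 0"
      then have lt: "curve_length t s (u \<circ> g) < curve_length t s (u \<circ> g) + ennreal e"
        by (simp add: ennreal_add_left_cancel_less top.not_eq_extremum)
      have "\<delta> > 0" using \<open>\<delta> \<in> {0<..}\<close> by simp
      obtain h where ball: "(t, s, h) \<in> curve_ball (t, s, g) \<delta>" and "(t, s, h) \<notin> \<Gamma>'"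
        and short: "curve_length t s (u \<circ> h) < curve_length t s (u \<circ> g) + ennreal e"
        by (rule regular_curve_approx[OF reg null \<open>\<delta> > 0\<close> lt])
      have "lip_curve (t, s, h)" and "dist (h t) (g t) < \<delta>" "dist (h s) (g s) < \<delta>"
        using ball \<open>t \<le> s\<close> by (auto elim!: curve_ballE)
      then have "(0, 1, \<lambda>x. h (t + (s - t) * x)) \<in> curves_between (cball (g t) \<delta>) (cball (g s) \<delta>) - \<Gamma>"
        using \<open>(t, s, h) \<notin> \<Gamma>'\<close> lip_curve_affine_reparam
        by (auto simp: curves_between_def \<Gamma>'_def dist_commute)
      then have "(INF c\<in>curves_between (cball (g t) \<delta>) (cball (g s) \<delta>) - \<Gamma>.
          case c of (a, b, \<gamma>) \<Rightarrow> curve_length a b (u \<circ> \<gamma>)) \<le> curve_length 0 1 (\<lambda>x. (u \<circ> h) (t + (s - t) * x))"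
        by (rule INF_lower2) (simp add: comp_def)
      also have "\<dots> \<le> curve_length t s (u \<circ> h)"
        using \<open>t \<le> s\<close> by (rule curve_length_affine_reparam_le)
      finally show "(INF c\<in>curves_between (cball (g t) \<delta>) (cball (g s) \<delta>) - \<Gamma>.
          case c of (a, b, \<gamma>) \<Rightarrow> curve_length a b (u \<circ> \<gamma>)) \<le> curve_length t s (u \<circ> g) + ennreal e"
        using short by simp
    qed
  qed
qed

lemma len_up_eq_curve_length:
  assumes u: "continuous_on UNIV u" and reg: "regular_curve \<mu> p u (a, b, g)"
  shows "len_up \<mu> p u (a, b, g) = curve_length a b (u \<circ> g)"
proof (rule antisym)
  show "len_up \<mu> p u (a, b, g) \<le> curve_length a b (u \<circ> g)"
    unfolding len_up_def curve_length_def prod.case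
  proof (rule var_length_le_if_pairs)
    fix x y assume "a \<le> x" "x \<le> y" "y \<le> b"
    then have "d_prime \<mu> p u (g x) (g y) \<le> curve_length x y (u \<circ> g)"
      by (intro d_prime_le_curve_length regular_curve_subinterval[OF u reg])
    then show "d_up \<mu> p u (g x) (g y) \<le> var_length edist x y (u \<circ> g)"
      unfolding curve_length_def using d_up_le_d_prime by (rule order_trans[rotated])
  qed
  show "curve_length a b (u \<circ> g) \<le> len_up \<mu> p u (a, b, g)"
    unfolding len_up_def curve_length_def prod.case
  proof (rule var_length_le_if_pairs)
    fix x y :: real assume "x \<le> y"
    then show "edist ((u \<circ> g) x) ((u \<circ> g) y) \<le> var_length (d_up \<mu> p u) x y g"
      using order_trans[OF dist_le_d_up[OF u] var_length_ge_pair[of x y "d_up \<mu> p u" g]] by simp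
  qed
qed

theorem proposition5p7:
  fixes \<mu> :: "'a::metric_space measure" and p :: real
    and u :: "'a \<Rightarrow> 'b::complete_space"
    and a b t s :: real and g :: "real \<Rightarrow> 'a"
  assumes "mms \<mu>" and "p \<ge> 1"
    and "newtonian_loc \<mu> p u" and "continuous_on UNIV u"
    and "regular_curve \<mu> p u (a, b, g)"
    and "a \<le> t" and "t \<le> s" and "s \<le> b"
  shows "regular_curve \<mu> p u (t, s, g) \<and> len_up \<mu> p u (a, b, g) = curve_length a b (u \<circ> g)"
  using regular_curve_subinterval[OF assms(4-8)] len_up_eq_curve_length[OF assms(4,5)] by simp

end
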